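(* Let $\Gamma$ be a group, $\alpha\in\mathrm{Aut}(\Gamma)$ and $a\in K(\alpha)$. Then the set $\{x\in\mathbb Q_2: a(x)\neq e_\Gamma\}$ is dense in $\mathrm{supp}(a)$.
   Context: $\{0,1\}^*$ denotes the finite words over $\{0,1\}$ (including the empty word), $|u|$ the length; $\mathfrak C=\{0,1\}^{\mathbb N}$ with the product topology; $\mathbb Q_2\subset\mathfrak C$ the eventually-zero sequences $u00\cdots$. $K(\alpha)$ is the group of maps $a:\{0,1\}^*\to\Gamma$ with $a(u)=\alpha(a(u0))$ for all $u$. For $x\in\mathbb Q_2$ one sets $a(x):=\alpha^{|u|}(a(u))$ where $x=u00\cdots$ (independent of the choice of $u$). The support is $\mathrm{supp}(a):=\{x=x_0x_1\cdots\in\mathfrak C:\ \text{for every } m\ge0 \text{ the map } w\mapsto a(x_0\cdots x_mw),\ w\in\{0,1\}^*, \text{ is not identically } e_\Gamma\}$. *)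

theory Defs
  imports "HOL-Analysis.Analysis" "HOL-Algebra.Group"
begin

(* Binary words {0,1}^* are bool lists (False = 0, True = 1), first letter first.
   Cantor space = nat => bool with the product topology (bool discrete). *)

definition Q2 :: "(nat \<Rightarrow> bool) set" where
  "Q2 = {x. \<exists>n. \<forall>k\<ge>n. \<not> x k}"

definition Kalpha :: "('g, 'b) monoid_scheme \<Rightarrow> ('g \<Rightarrow> 'g) \<Rightarrow> (bool list \<Rightarrow> 'g) set" where
  "Kalpha G \<alpha> = {a. \<forall>u. a u \<in> carrier G \<and> a u = \<alpha> (a (u @ [False]))}"

(* value at x = u00..., computed with u = x_0...x_{n-1}, n least with x eventually zero from n *)
definition Kval :: "('g \<Rightarrow> 'g) \<Rightarrow> (bool list \<Rightarrow> 'g) \<Rightarrow> (nat \<Rightarrow> bool) \<Rightarrow> 'g" where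
  "Kval \<alpha> a x = (let n = (LEAST n. \<forall>k\<ge>n. \<not> x k) in (\<alpha> ^^ n) (a (map x [0..<n])))"

definition Ksupp :: "('g, 'b) monoid_scheme \<Rightarrow> (bool list \<Rightarrow> 'g) \<Rightarrow> (nat \<Rightarrow> bool) set" where
  "Ksupp G a = {x. \<forall>m. \<exists>w. a (map x [0..<Suc m] @ w) \<noteq> \<one>\<^bsub>G\<^esub>}"

end

theory Submission
  imports Defs
begin

(* Since \<alpha> is injective, a(u) = e iff a(u0) = e; so for x = u00... the question whether
   a(x) = e can be read off a(v) for any prefix v of x that already contains u.  Hence a point
   of Q_2 with a(x) \<noteq> e lies in the support.  Conversely, every basic neighbourhood of a
   point of the support is a cylinder containing a word v with a(v) \<noteq> e, and the zero
   extension v00... is a point of Q_2 in that cylinder at which a does not vanish. *)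

lemma tendsto_fun_iff_componentwise:
  fixes f :: "'a \<Rightarrow> 'i \<Rightarrow> 'b::topological_space"
  shows "(f \<longlongrightarrow> l) F \<longleftrightarrow> (\<forall>i. ((\<lambda>c. f c i) \<longlongrightarrow> l i) F)"
  using limitin_componentwise[of "\<lambda>i. euclidean" UNIV f l F]
  by (simp add: euclidean_product_topology)

lemma in_closure_if_prefixes_approximable:
  fixes x :: "nat \<Rightarrow> 'b::topological_space"
  assumes "\<And>N. \<exists>y\<in>S. \<forall>i<N. y i = x i"
  shows "x \<in> closure S"
proof -
  obtain y where y_in: "\<And>N. y N \<in> S" and y_agrees: "\<And>N i. i < N \<Longrightarrow> y N i = x i"
    using assms by metis
  have "((\<lambda>N. y N i) \<longlongrightarrow> x i) sequentially" for i
    by (rule tendsto_eventually)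
      (use y_agrees in \<open>auto simp: eventually_sequentially intro!: exI[of _ "Suc i"]\<close>)
  then have "y \<longlonglongrightarrow> x"
    by (simp add: tendsto_fun_iff_componentwise)
  moreover have "\<forall>N. y N \<in> closure S"
    using y_in closure_subset by blast
  ultimately show ?thesis
    by (intro Lim_in_closed_set[OF closed_closure]) (auto intro: always_eventually)
qed

lemma upt_split_at:
  assumes "i \<le> j" "j \<le> k"
  shows "[i..<k] = [i..<j] @ [j..<k]"
  using upt_add_eq_append[of i j "k - j"] assms by simp

lemma map_upt_eventually_const:
  assumes "\<forall>k\<ge>m. f k = c" "m \<le> n"
  shows "map f [0..<n] = map f [0..<m] @ replicate (n - m) c"
proof -
  have "[0..<n] = [0..<m] @ [m..<n]"
    using assms(2) by (intro upt_split_at) simp_all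
  moreover have "map f [m..<n] = replicate (n - m) c"
    using assms(1) by (simp add: list_eq_iff_nth_eq)
  ultimately show ?thesis
    by simp
qed

lemma iso_funpow:
  assumes "h \<in> iso G G"
  shows "h ^^ n \<in> iso G G"
proof (induction n)
  case 0
  show ?case by (simp add: iso_set_refl)
next
  case (Suc n)
  then show ?case
    using iso_set_trans[OF Suc assms] by (simp only: funpow.simps(2))
qed

lemma iso_eq_one_iff:
  assumes "group G" "group H" "h \<in> iso G H" "g \<in> carrier G"
  shows "h g = \<one>\<^bsub>H\<^esub> \<longleftrightarrow> g = \<one>\<^bsub>G\<^esub>"
proof -
  have "h \<one>\<^bsub>G\<^esub> = \<one>\<^bsub>H\<^esub>"
    using assms(1-3) by (simp add: hom_one iso_imp_homomorphism)
  moreover have "inj_on h (carrier G)"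
    using assms(3) by (simp add: iso_iff)
  ultimately show ?thesis
    using assms(1,4) by (metis group.is_monoid inj_on_def monoid.one_closed)
qed

lemma Kalpha_closed:
  assumes "a \<in> Kalpha G \<alpha>"
  shows "a u \<in> carrier G"
  using assms unfolding Kalpha_def by blast

lemma Kalpha_eq_snoc_zero:
  assumes "a \<in> Kalpha G \<alpha>"
  shows "a u = \<alpha> (a (u @ [False]))"
  using assms unfolding Kalpha_def by blast

lemma Kalpha_append_zeros_eq_one_iff:
  assumes "group G" "\<alpha> \<in> iso G G" "a \<in> Kalpha G \<alpha>"
  shows "a (u @ replicate k False) = \<one>\<^bsub>G\<^esub> \<longleftrightarrow> a u = \<one>\<^bsub>G\<^esub>"
proof (induction k)
  case 0
  show ?case by simp
next
  case (Suc k)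
  have "a (u @ replicate k False) = \<alpha> (a (u @ replicate (Suc k) False))"
    using Kalpha_eq_snoc_zero[OF assms(3), of "u @ replicate k False"]
    by (simp only: append_assoc replicate_append_same replicate_Suc)
  then have "a (u @ replicate (Suc k) False) = \<one>\<^bsub>G\<^esub> \<longleftrightarrow> a (u @ replicate k False) = \<one>\<^bsub>G\<^esub>"
    by (simp only: iso_eq_one_iff[OF assms(1,1,2) Kalpha_closed[OF assms(3)]])
  then show ?case
    using Suc.IH by (simp only:)
qed

lemma Kval_eq_one_iff:
  assumes "group G" "\<alpha> \<in> iso G G" "a \<in> Kalpha G \<alpha>" and zeros: "\<forall>k\<ge>n. \<not> x k"
  shows "Kval \<alpha> a x = \<one>\<^bsub>G\<^esub> \<longleftrightarrow> a (map x [0..<n]) = \<one>\<^bsub>G\<^esub>"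
proof -
  define n0 where "n0 = (LEAST n. \<forall>k\<ge>n. \<not> x k)"
  have "\<forall>k\<ge>n0. \<not> x k"
    unfolding n0_def using zeros by (rule LeastI)
  moreover have "n0 \<le> n"
    unfolding n0_def using zeros by (rule Least_le)
  ultimately have "map x [0..<n] = map x [0..<n0] @ replicate (n - n0) False"
    by (intro map_upt_eventually_const) auto
  then have "a (map x [0..<n]) = \<one>\<^bsub>G\<^esub> \<longleftrightarrow> a (map x [0..<n0]) = \<one>\<^bsub>G\<^esub>"
    by (simp only: Kalpha_append_zeros_eq_one_iff[OF assms(1-3)])
  moreover have "Kval \<alpha> a x = (\<alpha> ^^ n0) (a (map x [0..<n0]))"
    unfolding Kval_def Let_def n0_def ..
  ultimately show ?thesis
    using iso_eq_one_iff[OF assms(1,1) iso_funpow[OF assms(2)] Kalpha_closed[OF assms(3)]] by simp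
qed

definition extend_by_zeros :: "bool list \<Rightarrow> nat \<Rightarrow> bool" where
  "extend_by_zeros v = (\<lambda>i. i < length v \<and> v ! i)"

lemma extend_by_zeros_in_Q2: "extend_by_zeros v \<in> Q2"
  unfolding Q2_def extend_by_zeros_def by (intro CollectI exI[of _ "length v"]) simp

lemma prefix_extend_by_zeros: "map (extend_by_zeros v) [0..<length v] = v"
  by (rule nth_equalityI) (simp_all add: extend_by_zeros_def)

lemma Kval_extend_by_zeros_eq_one_iff:
  assumes "group G" "\<alpha> \<in> iso G G" "a \<in> Kalpha G \<alpha>"
  shows "Kval \<alpha> a (extend_by_zeros v) = \<one>\<^bsub>G\<^esub> \<longleftrightarrow> a v = \<one>\<^bsub>G\<^esub>"
proof -
  have "\<forall>k\<ge>length v. \<not> extend_by_zeros v k"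
    by (simp add: extend_by_zeros_def)
  from Kval_eq_one_iff[OF assms this] show ?thesis
    by (simp only: prefix_extend_by_zeros)
qed

lemma Q2_ne_one_subset_Ksupp:
  assumes "group G" "\<alpha> \<in> iso G G" "a \<in> Kalpha G \<alpha>"
  shows "{x \<in> Q2. Kval \<alpha> a x \<noteq> \<one>\<^bsub>G\<^esub>} \<subseteq> Ksupp G a"
proof (unfold Ksupp_def, intro subsetI CollectI allI)
  fix x m
  assume "x \<in> {x \<in> Q2. Kval \<alpha> a x \<noteq> \<one>\<^bsub>G\<^esub>}"
  then obtain n where zeros: "\<forall>k\<ge>n. \<not> x k" and ne_one: "Kval \<alpha> a x \<noteq> \<one>\<^bsub>G\<^esub>"
    by (auto simp: Q2_def)
  define L where "L = max n (Suc m)"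
  have "\<forall>k\<ge>L. \<not> x k"
    using zeros by (simp add: L_def)
  then have prefix_ne_one: "a (map x [0..<L]) \<noteq> \<one>\<^bsub>G\<^esub>"
    using Kval_eq_one_iff[OF assms] ne_one by blast
  have "[0..<L] = [0..<Suc m] @ [Suc m..<L]"
    by (rule upt_split_at) (simp_all add: L_def)
  then have "map x [0..<L] = map x [0..<Suc m] @ map x [Suc m..<L]"
    by (simp only: map_append)
  then show "\<exists>w. a (map x [0..<Suc m] @ w) \<noteq> \<one>\<^bsub>G\<^esub>"
    using prefix_ne_one by metis
qed

lemma Ksupp_subset_closure_Q2_ne_one:
  assumes "group G" "\<alpha> \<in> iso G G" "a \<in> Kalpha G \<alpha>"
  shows "Ksupp G a \<subseteq> closure {x \<in> Q2. Kval \<alpha> a x \<noteq> \<one>\<^bsub>G\<^esub>}"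
proof (intro subsetI in_closure_if_prefixes_approximable)
  fix x N
  assume "x \<in> Ksupp G a"
  then obtain w where ne_one: "a (map x [0..<Suc N] @ w) \<noteq> \<one>\<^bsub>G\<^esub>"
    unfolding Ksupp_def by blast
  define y where "y = extend_by_zeros (map x [0..<Suc N] @ w)"
  have "y \<in> Q2"
    unfolding y_def by (rule extend_by_zeros_in_Q2)
  moreover have "Kval \<alpha> a y \<noteq> \<one>\<^bsub>G\<^esub>"
    unfolding y_def Kval_extend_by_zeros_eq_one_iff[OF assms] by (rule ne_one)
  moreover have "\<forall>i<N. y i = x i"
    by (simp add: y_def extend_by_zeros_def nth_append)
  ultimately show "\<exists>y\<in>{x \<in> Q2. Kval \<alpha> a x \<noteq> \<one>\<^bsub>G\<^esub>}. \<forall>i<N. y i = x i"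
    by blast
qed

theorem mainTheorem10:
  fixes G :: "('g, 'b) monoid_scheme" and \<alpha> :: "'g \<Rightarrow> 'g" and a :: "bool list \<Rightarrow> 'g"
  assumes "group G" and "\<alpha> \<in> iso G G" and "a \<in> Kalpha G \<alpha>"
  shows "{x \<in> Q2. Kval \<alpha> a x \<noteq> \<one>\<^bsub>G\<^esub>} \<subseteq> Ksupp G a
         \<and> Ksupp G a \<subseteq> closure {x \<in> Q2. Kval \<alpha> a x \<noteq> \<one>\<^bsub>G\<^esub>}"
  using Q2_ne_one_subset_Ksupp[OF assms] Ksupp_subset_closure_Q2_ne_one[OF assms] by blast

end
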